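(* Let $R>0$, $n\in\mathbb N$, $Q,K,V\in\mathbb R^{k\times d}$, $A:=K^\top Q/\sqrt k$. Let $f^m$ be masked self-attention and $F^m$ mean-field masked self-attention with parameters $(A,V)$. Then $$\mathrm{Lip}^{\|\cdot\|_F}\big(f^m_{|B_R^n}\big)\le\mathrm{Lip}^{d_2}\big(F^m_{|\mathcal P([0,1]\times B_R)}\big).$$
   Context: Masked self-attention: for $X=(x_1,\dots,x_n)\in(\mathbb R^d)^n$, $f^m(X)_i=V\sum_{j=1}^iP_{ij}x_j$ with $P_{ij}=\exp(x_i^\top A^\top x_j)/\sum_{l=1}^i\exp(x_i^\top A^\top x_l)$ for $j\le i$. $\mathrm{Lip}^{\|\cdot\|_F}(f^m_{|\mathcal X})=\sup_{X\ne Y\in\mathcal X}\|f^m(X)-f^m(Y)\|_F/\|X-Y\|_F$ with Frobenius norm $\|X\|_F=(\sum_i|x_i|^2)^{1/2}$. $B_R\subset\mathbb R^d$ is the closed ball of center 0, radius $R$. Mean-field masked self-attention: for a compactly supported probability measure $\bar\mu$ on $[0,1]\times\mathbb R^d$, $F^m(\bar\mu):=(\Gamma_{\bar\mu})_\sharp\bar\mu$ (pushforward), where $\Gamma_{\bar\mu}(s,x)=\Big(s,\dfrac{\int\exp(x^\top A^\top y)Vy\mathbf 1_{\tau\le s}d\bar\mu(\tau,y)}{\int\exp(x^\top A^\top y)\mathbf 1_{\tau\le s}d\bar\mu(\tau,y)}\Big)$. Distance $d_p$ ($p\ge1$): if $\bar\mu,\bar\nu$ have the same first marginal $\theta$ on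 $[0,1]$, disintegrate $d\bar\mu(\tau,x)=d\theta(\tau)d\mu^\tau(x)$, $d\bar\nu(\tau,x)=d\theta(\tau)d\nu^\tau(x)$ and set $d_p(\bar\mu,\bar\nu)=\big(\int_0^1W_p(\mu^\tau,\nu^\tau)^pd\theta(\tau)\big)^{1/p}$, where $W_p$ is the $p$-Wasserstein distance; otherwise $d_p(\bar\mu,\bar\nu)=+\infty$. $\mathcal P([0,1]\times B_R)$ is the set of probability measures supported in $[0,1]\times B_R$, and $\mathrm{Lip}^{d_2}(F^m_{|\mathcal X})$ is the supremum of $d_2(F^m(\bar\mu),F^m(\bar\nu))/d_2(\bar\mu,\bar\nu)$ over pairs $\bar\mu\ne\bar\nu$ in $\mathcal X$ with the same first marginal. *)

theory Defs
  imports "HOL-Probability.Probability"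
begin

definition attn_A :: "real^'d^'k \<Rightarrow> real^'d^'k \<Rightarrow> real^'d^'d" where
  "attn_A Q K = (1 / sqrt (real CARD('k))) *\<^sub>R (transpose K ** Q)"

text \<open>Sequences X = (x_1,...,x_n) are lists of length n (0-indexed).
  x_i^T A^T x_j = (A x_i) . x_j.\<close>
definition attn_P :: "real^'d^'d \<Rightarrow> (real^'d) list \<Rightarrow> nat \<Rightarrow> nat \<Rightarrow> real" where
  "attn_P A X i j =
     exp ((A *v (X!i)) \<bullet> (X!j)) / (\<Sum>l\<le>i. exp ((A *v (X!i)) \<bullet> (X!l)))"

definition masked_sa :: "real^'d^'d \<Rightarrow> real^'d^'k \<Rightarrow> (real^'d) list \<Rightarrow> (real^'k) list" where
  "masked_sa A V X = map (\<lambda>i. V *v (\<Sum>j\<le>i. attn_P A X i j *\<^sub>R (X!j))) [0..<length X]"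

definition frob_norm :: "('a::real_normed_vector) list \<Rightarrow> real" where
  "frob_norm X = sqrt (\<Sum>x\<leftarrow>X. (norm x)^2)"

definition list_diff :: "('a::ab_group_add) list \<Rightarrow> 'a list \<Rightarrow> 'a list" where
  "list_diff X Y = map2 (-) X Y"

definition ball_tuples :: "real \<Rightarrow> nat \<Rightarrow> (real^'d) list set" where
  "ball_tuples R n = {X. length X = n \<and> set X \<subseteq> cball 0 R}"

definition lip_frob ::
  "(('a::real_normed_vector) list \<Rightarrow> ('b::real_normed_vector) list) \<Rightarrow> 'a list set \<Rightarrow> ennreal" where
  "lip_frob f S = (SUP (X, Y) \<in> {(X, Y). X \<in> S \<and> Y \<in> S \<and> X \<noteq> Y}.
      ennreal (frob_norm (list_diff (f X) (f Y)) / frob_norm (list_diff X Y)))"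

definition Gamma_mf :: "real^'d^'d \<Rightarrow> real^'d^'k \<Rightarrow> (real \<times> (real^'d)) measure
    \<Rightarrow> real \<times> (real^'d) \<Rightarrow> real \<times> (real^'k)" where
  "Gamma_mf A V \<mu> = (\<lambda>(s, x).
     (s, (1 / (integral\<^sup>L \<mu> (\<lambda>(\<tau>, y). exp ((A *v x) \<bullet> y) * indicator {..s} \<tau>))) *\<^sub>R
         integral\<^sup>L \<mu> (\<lambda>(\<tau>, y). (exp ((A *v x) \<bullet> y) * indicator {..s} \<tau>) *\<^sub>R (V *v y))))"

definition mf_masked_sa :: "real^'d^'d \<Rightarrow> real^'d^'k \<Rightarrow> (real \<times> (real^'d)) measure
    \<Rightarrow> (real \<times> (real^'k)) measure" where
  "mf_masked_sa A V \<mu> = distr \<mu> borel (Gamma_mf A V \<mu>)"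

definition prob_supp :: "real \<Rightarrow> (real \<times> (real^'d)) measure set" where
  "prob_supp R = {\<mu>. sets \<mu> = sets borel \<and> prob_space \<mu> \<and>
                     emeasure \<mu> ({0..1} \<times> cball 0 R) = 1}"

definition enn_root :: "real \<Rightarrow> ennreal \<Rightarrow> ennreal" where
  "enn_root p x = (if x = \<top> then \<top> else ennreal (enn2real x powr (1 / p)))"

definition couplings :: "('a::euclidean_space) measure \<Rightarrow> 'a measure \<Rightarrow> ('a \<times> 'a) measure set" where
  "couplings \<mu> \<nu> = {\<pi>. sets \<pi> = sets borel \<and> prob_space \<pi> \<and>
                       distr \<pi> borel fst = \<mu> \<and> distr \<pi> borel snd = \<nu>}"

definition wasserstein_pow :: "real \<Rightarrow> ('a::euclidean_space) measure \<Rightarrow> 'a measure \<Rightarrow> ennreal" where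
  "wasserstein_pow p \<mu> \<nu> =
     (INF \<pi> \<in> couplings \<mu> \<nu>. \<integral>\<^sup>+ (x, y). ennreal (norm (x - y) powr p) \<partial>\<pi>)"

definition wasserstein :: "real \<Rightarrow> ('a::euclidean_space) measure \<Rightarrow> 'a measure \<Rightarrow> ennreal" where
  "wasserstein p \<mu> \<nu> = enn_root p (wasserstein_pow p \<mu> \<nu>)"

definition first_marginal :: "(real \<times> 'a::euclidean_space) measure \<Rightarrow> real measure" where
  "first_marginal \<mu> = distr \<mu> borel fst"

definition is_disintegration ::
  "(real \<times> 'a::euclidean_space) measure \<Rightarrow> (real \<Rightarrow> 'a measure) \<Rightarrow> bool" where
  "is_disintegration \<mu> \<kappa> \<longleftrightarrow>
     (\<forall>\<tau>. sets (\<kappa> \<tau>) = sets borel \<and> prob_space (\<kappa> \<tau>)) \<and>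
     (\<forall>B \<in> sets borel. (\<lambda>\<tau>. emeasure (\<kappa> \<tau>) B) \<in> borel_measurable borel) \<and>
     (\<forall>S \<in> sets borel. \<forall>B \<in> sets borel.
        emeasure \<mu> (S \<times> B) = (\<integral>\<^sup>+ \<tau>. indicator S \<tau> * emeasure (\<kappa> \<tau>) B \<partial>(first_marginal \<mu>)))"

definition disint :: "(real \<times> 'a::euclidean_space) measure \<Rightarrow> real \<Rightarrow> 'a measure" where
  "disint \<mu> = (SOME \<kappa>. is_disintegration \<mu> \<kappa>)"

definition d_p :: "real \<Rightarrow> (real \<times> 'a::euclidean_space) measure \<Rightarrow> (real \<times> 'a) measure \<Rightarrow> ennreal" where
  "d_p p \<mu> \<nu> =
     (if first_marginal \<mu> = first_marginal \<nu> then
        enn_root p (\<integral>\<^sup>+ \<tau>. wasserstein_pow p (disint \<mu> \<tau>) (disint \<nu> \<tau>) \<partial>(first_marginal \<mu>))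
      else \<top>)"

definition lip_d2 :: "((real \<times> 'a::euclidean_space) measure \<Rightarrow> (real \<times> 'b::euclidean_space) measure)
    \<Rightarrow> (real \<times> 'a) measure set \<Rightarrow> ennreal" where
  "lip_d2 F S = (SUP (\<mu>, \<nu>) \<in> {(\<mu>, \<nu>). \<mu> \<in> S \<and> \<nu> \<in> S \<and> \<mu> \<noteq> \<nu> \<and>
                                   first_marginal \<mu> = first_marginal \<nu>}.
      d_p 2 (F \<mu>) (F \<nu>) / d_p 2 \<mu> \<nu>)"

end

theory Submission
  imports Defs
begin

text \<open>A sequence \<open>X = (x\<^sub>0, \<dots>, x\<^sub>n\<^sub>-\<^sub>1)\<close> is encoded as the empirical measure
  \<open>\<mu>\<^sub>X = (1/n) \<Sum>\<^sub>i \<delta>(i/n, x\<^sub>i)\<close> on \<open>[0,1] \<times> \<real>\<^sup>d\<close>. Its first marginal is uniform on the grid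
  \<open>i/n\<close> and its disintegration at time \<open>i/n\<close> is \<open>\<delta>(x\<^sub>i)\<close>, so for sequences of equal length
  \<open>d\<^sub>2(\<mu>\<^sub>X, \<mu>\<^sub>Y) = \<parallel>X - Y\<parallel>\<^sub>F / \<surd>n\<close>. The mask \<open>\<tau> \<le> s\<close> restricts the mean-field average at
  time \<open>i/n\<close> to the atoms with \<open>j \<le> i\<close>, which is exactly the causal softmax, so
  \<open>F\<^sup>m(\<mu>\<^sub>X)\<close> is the encoding of \<open>f\<^sup>m(X)\<close>. Hence every Frobenius difference quotient of \<open>f\<^sup>m\<close> on \<open>B\<^sub>R\<^sup>n\<close>
  is a \<open>d\<^sub>2\<close> difference quotient of \<open>F\<^sup>m\<close> on \<open>\<P>([0,1] \<times> B\<^sub>R)\<close>.\<close>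

lemma ennreal_divide_right_cancel:
  fixes a b c :: ennreal
  assumes "c \<noteq> 0" "c \<noteq> \<top>" and "a / c = b / c"
  shows "a = b"
proof -
  have "a = a / c * c"
    using assms(1,2) by (simp add: ennreal_divide_times ennreal_mult_divide_eq top.not_eq_extremum)
  also have "\<dots> = b / c * c"
    by (simp only: assms(3))
  also have "\<dots> = b"
    using assms(1,2) by (simp add: ennreal_divide_times ennreal_mult_divide_eq top.not_eq_extremum)
  finally show ?thesis .
qed

text \<open>No measurability of \<open>f\<close> is required, since only its values on a finite set matter.
  This is needed because \<open>\<tau> \<mapsto> W\<^sub>p(disint \<mu> \<tau>, disint \<nu> \<tau>)\<close> is not known to be measurable.\<close>

lemma nn_integral_distr_finite_pmf:
  fixes g :: "'a \<Rightarrow> 'b::t1_space"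
  assumes fin: "finite (set_pmf p)"
  shows "(\<integral>\<^sup>+ y. f y \<partial>distr (measure_pmf p) borel g) = (\<integral>\<^sup>+ x. f (g x) \<partial>p)"
proof -
  let ?T = "g ` set_pmf p"
  let ?f = "\<lambda>y. \<Sum>t\<in>?T. f t * indicator {t} y"
  have delta: "?f y = f y" if "y \<in> ?T" for y
    using that fin by (simp add: indicator_def)
  have "AE y in distr (measure_pmf p) borel g. y \<in> ?T"
    using fin
    by (subst AE_distr_iff) (auto intro!: borel_closed finite_imp_closed simp: AE_measure_pmf_iff)
  then have "(\<integral>\<^sup>+ y. f y \<partial>distr (measure_pmf p) borel g) =
               (\<integral>\<^sup>+ y. ?f y \<partial>distr (measure_pmf p) borel g)"
    by (intro nn_integral_cong_AE) (auto elim!: eventually_mono simp: delta)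
  also have "\<dots> = (\<integral>\<^sup>+ x. ?f (g x) \<partial>p)"
    by (intro nn_integral_distr) auto
  also have "\<dots> = (\<integral>\<^sup>+ x. f (g x) \<partial>p)"
    by (intro nn_integral_cong_AE) (simp add: AE_measure_pmf_iff delta)
  finally show ?thesis .
qed

lemma wasserstein_pow_return:
  fixes a b :: "'a::euclidean_space"
  shows "wasserstein_pow p (return borel a) (return borel b) = ennreal (norm (a - b) powr p)"
proof -
  have cost: "(\<integral>\<^sup>+ (x, y). ennreal (norm (x - y) powr p) \<partial>\<pi>) = ennreal (norm (a - b) powr p)"
    if "\<pi> \<in> couplings (return borel a) (return borel b)" for \<pi>
  proof -
    from that have sets_\<pi>: "sets \<pi> = sets borel" and "prob_space \<pi>"
      and fst_\<pi>: "distr \<pi> borel fst = return borel a"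
      and snd_\<pi>: "distr \<pi> borel snd = return borel b"
      by (auto simp: couplings_def)
    have "fst \<in> measurable \<pi> borel" "snd \<in> measurable \<pi> borel"
      by (auto simp: measurable_cong_sets[OF sets_\<pi> refl] simp flip: borel_prod)
    moreover have "AE x in distr \<pi> borel fst. x = a" "AE y in distr \<pi> borel snd. y = b"
      unfolding fst_\<pi> snd_\<pi> by (subst AE_return; simp)+
    ultimately have "AE z in \<pi>. fst z = a" "AE z in \<pi>. snd z = b"
      by (simp_all add: AE_distr_iff)
    then have "AE z in \<pi>. z = (a, b)"
      by eventually_elim (simp add: prod_eq_iff)
    then have "(\<integral>\<^sup>+ (x, y). ennreal (norm (x - y) powr p) \<partial>\<pi>) =
                 (\<integral>\<^sup>+ z. ennreal (norm (a - b) powr p) \<partial>\<pi>)"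
      by (intro nn_integral_cong_AE) auto
    with \<open>prob_space \<pi>\<close> show ?thesis
      by (simp add: prob_space.emeasure_space_1)
  qed
  have "fst \<in> borel_measurable (borel :: ('a \<times> 'a) measure)"
    and "snd \<in> borel_measurable (borel :: ('a \<times> 'a) measure)"
    unfolding borel_prod[symmetric] by measurable
  then have "return borel (a, b) \<in> couplings (return borel a) (return borel b)"
    by (simp add: couplings_def prob_space_return distr_return)
  then show ?thesis
    unfolding wasserstein_pow_def by (auto simp: cost INF_constant)
qed

lemma borel_measurable_matrix_vector_mult [measurable]:
  fixes A :: "real^'n^'m"
  assumes "f \<in> borel_measurable M"
  shows "(\<lambda>x. A *v f x) \<in> borel_measurable M"
  using matrix_vector_mul_bounded_linear assms
  by (rule borel_measurable_continuous_on[OF linear_continuous_on])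

lemma frob_norm_nonneg: "0 \<le> frob_norm X"
  by (auto simp: frob_norm_def intro!: sum_list_nonneg)

lemma frob_norm_list_diff:
  fixes X Y :: "('a::real_normed_vector) list"
  assumes "length X = length Y"
  shows "frob_norm (list_diff X Y) = sqrt (\<Sum>i<length X. norm (X ! i - Y ! i)^2)"
  using assms by (simp add: frob_norm_def list_diff_def sum_list_sum_nth atLeast0LessThan)

lemma frob_norm_list_diff_eq_0_iff:
  fixes X Y :: "('a::real_normed_vector) list"
  assumes "length X = length Y"
  shows "frob_norm (list_diff X Y) = 0 \<longleftrightarrow> X = Y"
  using assms by (auto simp: frob_norm_list_diff sum_nonneg_eq_0_iff intro: nth_equalityI)

lemma length_masked_sa [simp]: "length (masked_sa A V X) = length X"
  by (simp add: masked_sa_def)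

section \<open>Empirical measures on a time grid\<close>

definition time_grid :: "nat \<Rightarrow> nat \<Rightarrow> real" where
  "time_grid n i = real i / real n"

definition empirical_measure :: "('a::euclidean_space) list \<Rightarrow> (real \<times> 'a) measure" where
  "empirical_measure X = distr (measure_pmf (pmf_of_set {..<length X})) borel
     (\<lambda>i. (time_grid (length X) i, X ! i))"

lemma time_grid_eq_iff: "n > 0 \<Longrightarrow> time_grid n i = time_grid n j \<longleftrightarrow> i = j"
  by (simp add: time_grid_def)

lemma time_grid_le_iff: "n > 0 \<Longrightarrow> time_grid n i \<le> time_grid n j \<longleftrightarrow> i \<le> j"
  by (simp add: time_grid_def divide_le_cancel)

lemma sum_indicator_time_grid_scaleR:
  fixes g :: "nat \<Rightarrow> 'b::real_vector"
  assumes "j < n"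
  shows "(\<Sum>i<n. indicator {time_grid n i} (time_grid n j) *\<^sub>R g i) = g j"
proof -
  have "(\<Sum>i<n. indicator {time_grid n i} (time_grid n j) *\<^sub>R g i) =
          (\<Sum>i<n. if i = j then g i else 0)"
    using assms by (intro sum.cong) (auto simp: time_grid_eq_iff)
  with assms show ?thesis by simp
qed

lemma sum_indicator_time_grid:
  fixes g :: "nat \<Rightarrow> 'b::semiring_1"
  assumes "i < n"
  shows "(\<Sum>j<n. indicator {time_grid n i} (time_grid n j) * g j) = g i"
proof -
  have "(\<Sum>j<n. indicator {time_grid n i} (time_grid n j) * g j) = (\<Sum>j<n. if j = i then g j else 0)"
    using assms by (intro sum.cong) (auto simp: time_grid_eq_iff)
  with assms show ?thesis by simp
qed

lemma sum_time_grid_le: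
  fixes g :: "nat \<Rightarrow> 'b::comm_monoid_add"
  assumes "i < n"
  shows "(\<Sum>j<n. if time_grid n j \<le> time_grid n i then g j else 0) = (\<Sum>j\<le>i. g j)"
proof -
  have "{j \<in> {..<n}. time_grid n j \<le> time_grid n i} = {..i}"
    using assms by (auto simp: time_grid_le_iff)
  moreover have "(\<Sum>j<n. if time_grid n j \<le> time_grid n i then g j else 0) =
                   sum g {j \<in> {..<n}. time_grid n j \<le> time_grid n i}"
    by (rule sum.inter_filter[symmetric]) simp
  ultimately show ?thesis
    by simp
qed

lemma sets_empirical_measure [simp]: "sets (empirical_measure X) = sets borel"
  by (simp add: empirical_measure_def)

lemma first_marginal_empirical_measure:
  "first_marginal (empirical_measure X) =
     distr (measure_pmf (pmf_of_set {..<length X})) borel (time_grid (length X))"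
  unfolding first_marginal_def empirical_measure_def
  by (subst distr_distr) (auto simp: comp_def space_pair_measure simp flip: borel_prod)

lemma nn_integral_first_marginal_empirical_measure:
  assumes "X \<noteq> []"
  shows "(\<integral>\<^sup>+ \<tau>. f \<tau> \<partial>first_marginal (empirical_measure X)) =
           (\<Sum>i<length X. f (time_grid (length X) i)) / of_nat (length X)"
  using assms unfolding first_marginal_empirical_measure
  by (subst nn_integral_distr_finite_pmf) (simp_all add: nn_integral_pmf_of_set lessThan_empty_iff)

lemma emeasure_empirical_measure:
  assumes "X \<noteq> []" and "A \<in> sets borel"
  shows "emeasure (empirical_measure X) A =
           (\<Sum>i<length X. indicator A (time_grid (length X) i, X ! i)) / of_nat (length X)"
proof -
  have "emeasure (empirical_measure X) A = (\<integral>\<^sup>+ y. indicator A y \<partial>empirical_measure X)"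
    using assms by simp
  also have "\<dots> = (\<integral>\<^sup>+ i. indicator A (time_grid (length X) i, X ! i) \<partial>pmf_of_set {..<length X})"
    unfolding empirical_measure_def using assms by (subst nn_integral_distr) auto
  finally show ?thesis
    using assms by (simp add: nn_integral_pmf_of_set lessThan_empty_iff)
qed

lemma integral_empirical_measure:
  fixes f :: "real \<times> 'a::euclidean_space \<Rightarrow> 'b::{banach, second_countable_topology}"
  assumes "X \<noteq> []" and [measurable]: "f \<in> borel_measurable borel"
  shows "(\<integral>z. f z \<partial>empirical_measure X) =
           (1 / length X) *\<^sub>R (\<Sum>i<length X. f (time_grid (length X) i, X ! i))"
proof -
  have "(\<integral>z. f z \<partial>empirical_measure X) =
          (\<integral>i. f (time_grid (length X) i, X ! i) \<partial>pmf_of_set {..<length X})"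
    unfolding empirical_measure_def by (rule integral_distr) auto
  also have "\<dots> = (\<Sum>i<length X. (1 / length X) *\<^sub>R f (time_grid (length X) i, X ! i))"
    using assms(1) by (subst integral_measure_pmf[of "{..<length X}"]) (auto simp: lessThan_empty_iff)
  finally show ?thesis
    by (simp add: scaleR_sum_right)
qed

lemma empirical_measure_in_prob_supp:
  assumes "X \<noteq> []" and "set X \<subseteq> cball 0 R"
  shows "empirical_measure X \<in> prob_supp R"
proof -
  have "indicator ({0..1} \<times> cball 0 R) (time_grid (length X) i, X ! i) = (1::ennreal)"
    if "i < length X" for i
    using that assms nth_mem by (fastforce simp: time_grid_def indicator_def)
  then have "emeasure (empirical_measure X) ({0..1} \<times> cball 0 R) = 1"
    using assms by (simp add: emeasure_empirical_measure borel_Times ennreal_of_nat_eq_real_of_nat)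
  with assms show ?thesis
    by (auto simp: prob_supp_def empirical_measure_def intro!: measure_pmf.prob_space_distr)
qed

section \<open>Disintegration and the distance \<open>d\<^sub>p\<close>\<close>

lemma is_disintegration_empirical_measure:
  fixes X :: "('a::euclidean_space) list"
  assumes "X \<noteq> []"
  shows "is_disintegration (empirical_measure X)
           (\<lambda>\<tau>. return borel (\<Sum>i<length X. indicator {time_grid (length X) i} \<tau> *\<^sub>R X ! i))"
    (is "is_disintegration _ ?\<kappa>")
  unfolding is_disintegration_def
proof (intro conjI ballI allI)
  fix \<tau> show "sets (?\<kappa> \<tau>) = sets borel" "prob_space (?\<kappa> \<tau>)"
    by (simp_all add: prob_space_return)
next
  fix B :: "'a set" assume B: "B \<in> sets borel"
  have "(\<lambda>\<tau>. indicator B (\<Sum>i<length X. indicator {time_grid (length X) i} \<tau> *\<^sub>R X ! i))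
          \<in> borel_measurable borel"
    using B by measurable
  with B show "(\<lambda>\<tau>. emeasure (?\<kappa> \<tau>) B) \<in> borel_measurable borel"
    by simp
next
  fix S :: "real set" and B :: "'a set" assume S: "S \<in> sets borel" and B: "B \<in> sets borel"
  let ?n = "length X"
  have kernel_at_grid: "?\<kappa> (time_grid ?n j) = return borel (X ! j)" if "j < ?n" for j
    using that by (simp only: sum_indicator_time_grid_scaleR)
  have "emeasure (empirical_measure X) (S \<times> B) =
          (\<Sum>i<?n. indicator (S \<times> B) (time_grid ?n i, X ! i)) / of_nat ?n"
    using assms S B by (simp add: emeasure_empirical_measure borel_Times)
  also have "\<dots> = (\<Sum>i<?n. indicator S (time_grid ?n i) * emeasure (?\<kappa> (time_grid ?n i)) B) / of_nat ?n"
    using B by (intro arg_cong2[where f = "(/)"] sum.cong refl)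
      (simp only: kernel_at_grid lessThan_iff, simp add: indicator_times)
  also have "\<dots> = (\<integral>\<^sup>+ \<tau>. indicator S \<tau> * emeasure (?\<kappa> \<tau>) B \<partial>first_marginal (empirical_measure X))"
    using assms by (rule nn_integral_first_marginal_empirical_measure[symmetric])
  finally show "emeasure (empirical_measure X) (S \<times> B) =
      (\<integral>\<^sup>+ \<tau>. indicator S \<tau> * emeasure (?\<kappa> \<tau>) B \<partial>first_marginal (empirical_measure X))" .
qed

text \<open>Since \<open>disint\<close> is a choice, it can only be computed where all disintegrations agree:
  at the atoms of the first marginal.\<close>

lemma is_disintegration_empirical_measure_at_grid:
  fixes X :: "('a::euclidean_space) list"
  assumes \<kappa>: "is_disintegration (empirical_measure X) \<kappa>" and i: "i < length X"
  shows "\<kappa> (time_grid (length X) i) = return borel (X ! i)"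
proof (rule measure_eqI)
  let ?n = "length X" and ?t = "time_grid (length X) i"
  have sets_\<kappa>: "sets (\<kappa> \<tau>) = sets borel" for \<tau>
    using \<kappa> by (simp add: is_disintegration_def)
  have emeasure_Times: "emeasure (empirical_measure X) (S \<times> B) =
      (\<integral>\<^sup>+ \<tau>. indicator S \<tau> * emeasure (\<kappa> \<tau>) B \<partial>first_marginal (empirical_measure X))"
    if "S \<in> sets borel" "B \<in> sets borel" for S B
    using \<kappa> that unfolding is_disintegration_def by blast
  show "sets (\<kappa> ?t) = sets (return borel (X ! i))" by (simp add: sets_\<kappa>)
  fix B assume "B \<in> sets (\<kappa> ?t)"
  then have B: "B \<in> sets borel" by (simp add: sets_\<kappa>)
  have X: "X \<noteq> []" using i by auto
  have t: "{?t} \<in> sets borel" by (simp add: borel_closed)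
  have "emeasure (\<kappa> ?t) B / of_nat ?n =
          (\<Sum>j<?n. indicator {?t} (time_grid ?n j) * emeasure (\<kappa> (time_grid ?n j)) B) / of_nat ?n"
    using i by (simp only: sum_indicator_time_grid)
  also have "\<dots> = (\<integral>\<^sup>+ \<tau>. indicator {?t} \<tau> * emeasure (\<kappa> \<tau>) B \<partial>first_marginal (empirical_measure X))"
    using X by (rule nn_integral_first_marginal_empirical_measure[symmetric])
  also have "\<dots> = emeasure (empirical_measure X) ({?t} \<times> B)"
    using t B by (rule emeasure_Times[symmetric])
  also have "\<dots> = (\<Sum>j<?n. indicator {?t} (time_grid ?n j) * indicator B (X ! j)) / of_nat ?n"
    by (simp only: emeasure_empirical_measure[OF X borel_Times[OF t B]] indicator_times fst_conv snd_conv)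
  also have "\<dots> = indicator B (X ! i) / of_nat ?n"
    using i by (simp only: sum_indicator_time_grid)
  finally have "emeasure (\<kappa> ?t) B = indicator B (X ! i)"
    by (rule ennreal_divide_right_cancel[rotated 2]) (use X in simp_all)
  with B show "emeasure (\<kappa> ?t) B = emeasure (return borel (X ! i)) B"
    by simp
qed

lemma disint_empirical_measure:
  fixes X :: "('a::euclidean_space) list"
  assumes "i < length X"
  shows "disint (empirical_measure X) (time_grid (length X) i) = return borel (X ! i)"
proof -
  from assms have "X \<noteq> []" by auto
  then have "is_disintegration (empirical_measure X) (disint (empirical_measure X))"
    unfolding disint_def
    by (rule someI[where P = "is_disintegration (empirical_measure X)", OF is_disintegration_empirical_measure])
  then show ?thesis
    using assms by (rule is_disintegration_empirical_measure_at_grid)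
qed

lemma empirical_measure_eq_iff:
  fixes X Y :: "('a::euclidean_space) list"
  assumes "length X = length Y"
  shows "empirical_measure X = empirical_measure Y \<longleftrightarrow> X = Y"
proof
  assume eq: "empirical_measure X = empirical_measure Y"
  show "X = Y"
  proof (rule nth_equalityI)
    fix i assume i: "i < length X"
    have "return borel (X ! i) = return borel (Y ! i)"
      using disint_empirical_measure[OF i] disint_empirical_measure[of i Y] i assms eq by simp
    then have "emeasure (return borel (X ! i)) {Y ! i} = emeasure (return borel (Y ! i)) {Y ! i}"
      by simp
    then show "X ! i = Y ! i"
      by (simp add: borel_closed split: split_indicator_asm)
  qed (use assms in simp)
qed simp

lemma d_p_empirical_measure:
  fixes X Y :: "('a::euclidean_space) list"
  assumes "length X = length Y" and "X \<noteq> []"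
  shows "d_p p (empirical_measure X) (empirical_measure Y) =
           ennreal (((\<Sum>i<length X. norm (X ! i - Y ! i) powr p) / length X) powr (1 / p))"
proof -
  let ?n = "length X" and ?\<mu> = "empirical_measure X" and ?\<nu> = "empirical_measure Y"
  have marginals: "first_marginal ?\<mu> = first_marginal ?\<nu>"
    using assms(1) by (simp add: first_marginal_empirical_measure)
  have "(\<integral>\<^sup>+ \<tau>. wasserstein_pow p (disint ?\<mu> \<tau>) (disint ?\<nu> \<tau>) \<partial>first_marginal ?\<mu>) =
          (\<Sum>i<?n. wasserstein_pow p (disint ?\<mu> (time_grid ?n i)) (disint ?\<nu> (time_grid ?n i))) / of_nat ?n"
    using assms(2) by (rule nn_integral_first_marginal_empirical_measure)
  also have "\<dots> = (\<Sum>i<?n. ennreal (norm (X ! i - Y ! i) powr p)) / of_nat ?n"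
    using disint_empirical_measure[of _ X] disint_empirical_measure[of _ Y] assms(1)
    by (simp add: wasserstein_pow_return)
  also have "\<dots> = ennreal ((\<Sum>i<?n. norm (X ! i - Y ! i) powr p) / ?n)"
    using assms(2) by (simp add: ennreal_of_nat_eq_real_of_nat divide_ennreal sum_nonneg)
  finally show ?thesis
    using marginals by (simp add: d_p_def enn_root_def sum_nonneg)
qed

lemma d_p_2_empirical_measure:
  fixes X Y :: "('a::euclidean_space) list"
  assumes "length X = length Y" and "X \<noteq> []"
  shows "d_p 2 (empirical_measure X) (empirical_measure Y) =
           ennreal (frob_norm (list_diff X Y) / sqrt (length X))"
  using assms
  by (simp add: d_p_empirical_measure frob_norm_list_diff powr_half_sqrt sum_nonneg real_sqrt_divide)

section \<open>Mean-field masked self-attention on empirical measures\<close>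

text \<open>Unlike \<open>Gamma_mf\<close> it is visibly Borel
  measurable, which the pushforward in \<open>mf_masked_sa\<close> requires.\<close>

definition empirical_attention ::
    "real^'d^'d \<Rightarrow> real^'d^'k \<Rightarrow> (real^'d) list \<Rightarrow> real \<times> (real^'d) \<Rightarrow> real \<times> (real^'k)" where
  "empirical_attention A V X = (\<lambda>(s, x).
     (s, (1 / (\<Sum>j<length X. exp ((A *v x) \<bullet> X ! j) * of_bool (time_grid (length X) j \<le> s))) *\<^sub>R
         (\<Sum>j<length X. (exp ((A *v x) \<bullet> X ! j) * of_bool (time_grid (length X) j \<le> s)) *\<^sub>R
            (V *v X ! j))))"

lemma empirical_attention_measurable [measurable]:
  "empirical_attention A V X \<in> borel_measurable borel"
  unfolding empirical_attention_def borel_prod[symmetric] by measurable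

lemma Gamma_mf_empirical_measure:
  fixes A :: "real^'d^'d" and V :: "real^'d^'k"
  assumes "X \<noteq> []"
  shows "Gamma_mf A V (empirical_measure X) = empirical_attention A V X"
proof (intro ext, clarify)
  fix s :: real and x :: "real^'d"
  let ?n = "length X"
  let ?w = "\<lambda>y \<tau>. exp ((A *v x) \<bullet> y) * indicator {..s} \<tau>"
  have "(\<lambda>(\<tau>, y). ?w y \<tau>) \<in> borel_measurable borel"
    unfolding borel_prod[symmetric] by measurable
  from integral_empirical_measure[OF assms this]
  have int_den: "(\<integral>(\<tau>, y). ?w y \<tau> \<partial>empirical_measure X) =
                   (1 / ?n) * (\<Sum>j<?n. ?w (X ! j) (time_grid ?n j))"
    by (simp only: case_prod_conv real_scaleR_def)
  have "(\<lambda>(\<tau>, y). ?w y \<tau> *\<^sub>R (V *v y)) \<in> borel_measurable borel"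
    unfolding borel_prod[symmetric] by measurable
  from integral_empirical_measure[OF assms this]
  have int_num: "(\<integral>(\<tau>, y). ?w y \<tau> *\<^sub>R (V *v y) \<partial>empirical_measure X) =
                   (1 / ?n) *\<^sub>R (\<Sum>j<?n. ?w (X ! j) (time_grid ?n j) *\<^sub>R (V *v X ! j))"
    by (simp only: case_prod_conv)
  show "Gamma_mf A V (empirical_measure X) (s, x) = empirical_attention A V X (s, x)"
    unfolding Gamma_mf_def case_prod_conv int_den int_num
    using assms by (simp add: empirical_attention_def indicator_def)
qed

lemma empirical_attention_at_grid:
  fixes A :: "real^'d^'d" and V :: "real^'d^'k"
  assumes i: "i < length X"
  shows "empirical_attention A V X (time_grid (length X) i, X ! i) =
           (time_grid (length X) i, masked_sa A V X ! i)"
proof -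
  let ?n = "length X" and ?e = "\<lambda>j. exp ((A *v X ! i) \<bullet> X ! j)"
  have den: "(\<Sum>j<?n. ?e j * of_bool (time_grid ?n j \<le> time_grid ?n i)) = (\<Sum>j\<le>i. ?e j)"
    using i by (subst sum_time_grid_le[symmetric]) (auto intro!: sum.cong simp: of_bool_def)
  have num: "(\<Sum>j<?n. (?e j * of_bool (time_grid ?n j \<le> time_grid ?n i)) *\<^sub>R (V *v X ! j)) =
               (\<Sum>j\<le>i. ?e j *\<^sub>R (V *v X ! j))"
    using i by (subst sum_time_grid_le[symmetric]) (auto intro!: sum.cong simp: of_bool_def)
  have "masked_sa A V X ! i = V *v (\<Sum>j\<le>i. attn_P A X i j *\<^sub>R X ! j)"
    using i by (simp add: masked_sa_def)
  also have "\<dots> = (\<Sum>j\<le>i. attn_P A X i j *\<^sub>R (V *v X ! j))"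
    by (simp add: linear_sum[OF matrix_vector_mul_linear] matrix_vector_mult_scaleR)
  also have "\<dots> = (1 / (\<Sum>j\<le>i. ?e j)) *\<^sub>R (\<Sum>j\<le>i. ?e j *\<^sub>R (V *v X ! j))"
    by (simp add: attn_P_def scaleR_sum_right)
  finally have "masked_sa A V X ! i = (1 / (\<Sum>j\<le>i. ?e j)) *\<^sub>R (\<Sum>j\<le>i. ?e j *\<^sub>R (V *v X ! j))" .
  then show ?thesis
    unfolding empirical_attention_def case_prod_conv den num by simp
qed

lemma mf_masked_sa_empirical_measure:
  fixes A :: "real^'d^'d" and V :: "real^'d^'k"
  assumes "X \<noteq> []"
  shows "mf_masked_sa A V (empirical_measure X) = empirical_measure (masked_sa A V X)"
proof -
  let ?n = "length X"
  have "mf_masked_sa A V (empirical_measure X) =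
          distr (pmf_of_set {..<?n}) borel (\<lambda>i. empirical_attention A V X (time_grid ?n i, X ! i))"
    unfolding mf_masked_sa_def Gamma_mf_empirical_measure[OF assms]
    unfolding empirical_measure_def by (subst distr_distr) (auto simp: comp_def)
  also have "\<dots> = distr (pmf_of_set {..<?n}) borel (\<lambda>i. (time_grid ?n i, masked_sa A V X ! i))"
    using assms by (intro distr_cong_AE)
      (auto simp: AE_measure_pmf_iff lessThan_empty_iff empirical_attention_at_grid)
  finally show ?thesis
    by (simp add: empirical_measure_def)
qed

lemma masked_sa_ratio_eq_mf_masked_sa_ratio:
  fixes A :: "real^'d^'d" and V :: "real^'d^'k"
  assumes len: "length X = length Y" and "X \<noteq> Y"
  shows "ennreal (frob_norm (list_diff (masked_sa A V X) (masked_sa A V Y)) / frob_norm (list_diff X Y)) =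
           d_p 2 (mf_masked_sa A V (empirical_measure X)) (mf_masked_sa A V (empirical_measure Y)) /
           d_p 2 (empirical_measure X) (empirical_measure Y)"
proof -
  let ?f = "masked_sa A V" and ?c = "sqrt (length X)"
  have X: "X \<noteq> []" and Y: "Y \<noteq> []"
    using assms by auto
  then have fX: "?f X \<noteq> []"
    by (simp add: masked_sa_def)
  have mf: "mf_masked_sa A V (empirical_measure X) = empirical_measure (?f X)"
    "mf_masked_sa A V (empirical_measure Y) = empirical_measure (?f Y)"
    using X Y by (simp_all add: mf_masked_sa_empirical_measure)
  have "frob_norm (list_diff X Y) > 0"
    using assms frob_norm_nonneg[of "list_diff X Y"] by (simp add: frob_norm_list_diff_eq_0_iff order_less_le)
  moreover have "d_p 2 (empirical_measure X) (empirical_measure Y) = ennreal (frob_norm (list_diff X Y) / ?c)"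
    using len X by (rule d_p_2_empirical_measure)
  moreover have "d_p 2 (empirical_measure (?f X)) (empirical_measure (?f Y)) =
                   ennreal (frob_norm (list_diff (?f X) (?f Y)) / ?c)"
    using len fX by (simp add: d_p_2_empirical_measure)
  ultimately show ?thesis
    using X unfolding mf by (simp add: divide_ennreal frob_norm_nonneg)
qed

theorem mainTheorem9:
  fixes R :: real and n :: nat
    and Q K :: "real^'d^'k" and V :: "real^'d^'k"
  assumes "R > 0"
  shows "lip_frob (masked_sa (attn_A Q K) V) (ball_tuples R n :: (real^'d) list set)
           \<le> lip_d2 (mf_masked_sa (attn_A Q K) V) (prob_supp R)"
  unfolding lip_frob_def
proof (rule SUP_least, clarify)
  fix X Y :: "(real^'d) list"
  assume "X \<in> ball_tuples R n" "Y \<in> ball_tuples R n" and XY: "X \<noteq> Y"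
  then have len: "length X = length Y" and "X \<noteq> []" "Y \<noteq> []"
    and "set X \<subseteq> cball 0 R" "set Y \<subseteq> cball 0 R"
    by (auto simp: ball_tuples_def)
  then have "empirical_measure X \<in> prob_supp R" "empirical_measure Y \<in> prob_supp R"
    and "empirical_measure X \<noteq> empirical_measure Y"
    and "first_marginal (empirical_measure X) = first_marginal (empirical_measure Y)"
    using XY by (simp_all add: empirical_measure_in_prob_supp empirical_measure_eq_iff
        first_marginal_empirical_measure)
  then show "ennreal (frob_norm (list_diff (masked_sa (attn_A Q K) V X) (masked_sa (attn_A Q K) V Y)) /
               frob_norm (list_diff X Y)) \<le> lip_d2 (mf_masked_sa (attn_A Q K) V) (prob_supp R)"
    unfolding masked_sa_ratio_eq_mf_masked_sa_ratio[OF len XY] lip_d2_def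
    by (intro SUP_upper2[where i = "(empirical_measure X, empirical_measure Y)"]) auto
qed

end
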